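(* Let $W$ be an irreducible euclidean Coxeter group not of type $\widetilde A_n$ and let $\sigma$ be a chamber of its Coxeter complex. Then the bipartite line of $\sigma$ is the axis (min-set) of each of the two bipartite Coxeter elements $w_1w_0$ and $w_0w_1$ produced by $\sigma$.
   Context: $W$ acts on a euclidean space $E$, generated by reflections in the facets of a euclidean simplex with dihedral angles submultiples of $\pi$, properly and cocompactly; chambers are images of the simplex. The diagram $\Gamma$ (a tree here) has a unique bipartition, giving a partition $S_0\sqcup S_1$ of the reflections in the facets of $\sigma$ into pairwise-commuting sets; $w_j$ is the product of the reflections in $S_j$; $F_j$ is the face of $\sigma$ cut out by the hyperplanes of the reflections in $S_j$ and $B_j$ is its affine hull. $B_0,B_1$ are disjoint and there is a unique pair of points $x_0\in B_0,x_1\in B_1$ realizing the distance between them; the bipartite line of $\sigma$ is the line through $x_0,x_1$. The min-set (axis) of an isometry is the set of points it moves the minimal distance. *)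

theory Defs
  imports "HOL-Analysis.Analysis"
begin

text \<open>A simplex sigma in a euclidean space of dimension n = DIM('a) is given by its
  n+1 vertices v 0, ..., v n.  Facet i is the facet opposite to vertex i.\<close>

definition simplex_of :: "(nat \<Rightarrow> 'a::euclidean_space) \<Rightarrow> 'a set" where
  "simplex_of v = convex hull (v ` {0..DIM('a)})"

definition facet_hyp :: "(nat \<Rightarrow> 'a::euclidean_space) \<Rightarrow> nat \<Rightarrow> 'a set" where
  "facet_hyp v i = affine hull (v ` ({0..DIM('a)} - {i}))"

definition reflect_in :: "'a::euclidean_space set \<Rightarrow> 'a \<Rightarrow> 'a" where
  "reflect_in H x = 2 *\<^sub>R closest_point H x - x"

definition inward_normal :: "(nat \<Rightarrow> 'a::euclidean_space) \<Rightarrow> nat \<Rightarrow> 'a" where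
  "inward_normal v i = v i - closest_point (facet_hyp v i) (v i)"

definition vec_angle :: "'a::euclidean_space \<Rightarrow> 'a \<Rightarrow> real" where
  "vec_angle u w = arccos ((u \<bullet> w) / (norm u * norm w))"

definition dihedral_angle :: "(nat \<Rightarrow> 'a::euclidean_space) \<Rightarrow> nat \<Rightarrow> nat \<Rightarrow> real" where
  "dihedral_angle v i j = pi - vec_angle (inward_normal v i) (inward_normal v j)"

definition coxeter_simplex :: "(nat \<Rightarrow> 'a::euclidean_space) \<Rightarrow> bool" where
  "coxeter_simplex v \<longleftrightarrow>
     inj_on v {0..DIM('a)} \<and> \<not> affine_dependent (v ` {0..DIM('a)}) \<and>
     (\<forall>i\<in>{0..DIM('a)}. \<forall>j\<in>{0..DIM('a)}. i \<noteq> j \<longrightarrow>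
        (\<exists>m::nat. m \<ge> 2 \<and> dihedral_angle v i j = pi / real m))"

text \<open>Edges of the Coxeter diagram: m_ij >= 3, i.e. dihedral angle different from pi/2
  (equivalently, s_i and s_j do not commute).\<close>
definition cox_edge :: "(nat \<Rightarrow> 'a::euclidean_space) \<Rightarrow> nat \<Rightarrow> nat \<Rightarrow> bool" where
  "cox_edge v i j \<longleftrightarrow> i \<noteq> j \<and> dihedral_angle v i j \<noteq> pi / 2"

definition diagram_connected :: "(nat \<Rightarrow> 'a::euclidean_space) \<Rightarrow> bool" where
  "diagram_connected v \<longleftrightarrow>
     (\<forall>i\<in>{0..DIM('a)}. \<forall>j\<in>{0..DIM('a)}.
        (\<lambda>a b. a \<in> {0..DIM('a)} \<and> b \<in> {0..DIM('a)} \<and> cox_edge v a b)\<^sup>*\<^sup>* i j)"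

definition irreducible_coxeter :: "(nat \<Rightarrow> 'a::euclidean_space) \<Rightarrow> bool" where
  "irreducible_coxeter v \<longleftrightarrow> diagram_connected v"

text \<open>Type A~_n (n >= 2): the diagram is a single cycle through all n+1 nodes
  (connected and 2-regular), all labels equal to 3.  (A~_1, label infinity, cannot
  occur: facets of a simplex with dihedral angles pi/m are never parallel.)\<close>
definition type_A_tilde :: "(nat \<Rightarrow> 'a::euclidean_space) \<Rightarrow> bool" where
  "type_A_tilde v \<longleftrightarrow>
     DIM('a) \<ge> 2 \<and> diagram_connected v \<and>
     (\<forall>i\<in>{0..DIM('a)}. card {j\<in>{0..DIM('a)}. cox_edge v i j} = 2) \<and>
     (\<forall>i\<in>{0..DIM('a)}. \<forall>j\<in>{0..DIM('a)}. cox_edge v i j \<longrightarrow> dihedral_angle v i j = pi / 3)"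

text \<open>Product of the (pairwise commuting) reflections in the facets indexed by S.\<close>
definition prod_refl :: "(nat \<Rightarrow> 'a::euclidean_space) \<Rightarrow> nat set \<Rightarrow> 'a \<Rightarrow> 'a" where
  "prod_refl v S = fold (\<lambda>i f. reflect_in (facet_hyp v i) \<circ> f) (sorted_list_of_set S) id"

definition face_of_walls :: "(nat \<Rightarrow> 'a::euclidean_space) \<Rightarrow> nat set \<Rightarrow> 'a set" where
  "face_of_walls v S = simplex_of v \<inter> \<Inter> (facet_hyp v ` S)"

definition face_hull :: "(nat \<Rightarrow> 'a::euclidean_space) \<Rightarrow> nat set \<Rightarrow> 'a set" where
  "face_hull v S = affine hull (face_of_walls v S)"

definition min_set :: "('a::metric_space \<Rightarrow> 'a) \<Rightarrow> 'a set" where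
  "min_set g = {x. \<forall>y. dist x (g x) \<le> dist y (g y)}"

end

theory Submission
  imports Defs
begin

text \<open>Write the wall of facet i as a_i . x = c_i with a unit normal a_i. The walls in S_j have
  pairwise orthogonal normals, so w_j is x - 2 sum_(i in S_j) (a_i . x - c_i) a_i, with linear part
  R_j.  Minimality of the pair (x0, x1) makes d = x1 - x0 a combination of the normals in S_0 and
  also of those in S_1, hence R_0 d = R_1 d = -d.  It follows that
  w_1 w_0 (x0 + z) - (x0 + z) = 2 d + (R_1 R_0 z - z) with the second summand orthogonal to d, so
  the displacement is minimal exactly when R_1 R_0 z = z, i.e. when z lies in
  span (a_S0) \<inter> span (a_S1).  The n+1 normals span R^n and each orthonormal family is
  independent, so this intersection is a line, namely R d.\<close>

lemma closest_point_hyperplane: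
  fixes a :: "'a::euclidean_space"
  assumes "norm a = 1"
  shows "closest_point {x. a \<bullet> x = c} y = y - (a \<bullet> y - c) *\<^sub>R a"
proof (rule closest_point_unique[symmetric])
  show "convex {x. a \<bullet> x = c}" "closed {x. a \<bullet> x = c}"
    by (simp_all add: convex_hyperplane closed_hyperplane)
  show "y - (a \<bullet> y - c) *\<^sub>R a \<in> {x. a \<bullet> x = c}"
    using assms by (simp add: inner_diff_right norm_eq_1)
  show "\<forall>z\<in>{x. a \<bullet> x = c}. dist y (y - (a \<bullet> y - c) *\<^sub>R a) \<le> dist y z"
  proof
    fix z assume z: "z \<in> {x. a \<bullet> x = c}"
    have "dist y (y - (a \<bullet> y - c) *\<^sub>R a) = \<bar>a \<bullet> (y - z)\<bar>"
      using assms z by (simp add: dist_norm inner_diff_right)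
    also have "\<dots> \<le> dist y z"
      using Cauchy_Schwarz_ineq2[of a "y - z"] assms by (simp add: dist_norm)
    finally show "dist y (y - (a \<bullet> y - c) *\<^sub>R a) \<le> dist y z" .
  qed
qed

lemma reflect_in_hyperplane:
  fixes a :: "'a::euclidean_space"
  assumes "norm a = 1"
  shows "reflect_in {x. a \<bullet> x = c} y = y - (2 * (a \<bullet> y - c)) *\<^sub>R a"
  unfolding reflect_in_def closest_point_hyperplane[OF assms] by (simp add: algebra_simps scaleR_2)

lemma inner_eq_0_if_vec_angle_right:
  fixes u w :: "'a::euclidean_space"
  assumes "u \<noteq> 0" "w \<noteq> 0" "vec_angle u w = pi / 2"
  shows "u \<bullet> w = 0"
proof -
  let ?t = "(u \<bullet> w) / (norm u * norm w)"
  have pos: "norm u * norm w > 0" using assms(1,2) by simp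
  have "\<bar>?t\<bar> \<le> 1"
    using Cauchy_Schwarz_ineq2[of u w] pos by (simp add: abs_div divide_le_eq_1)
  moreover have "arccos ?t = arccos 0" using assms(3) by (simp add: vec_angle_def)
  ultimately have "?t = 0" using arccos_eq_iff[of ?t 0] by simp
  with assms(1,2) show ?thesis by simp
qed

lemma nearest_point_orthogonal:
  fixes x y w :: "'a::euclidean_space"
  assumes "convex A" "closed A" "x \<in> A" "x + w \<in> A" "x - w \<in> A"
    and nearest: "\<forall>z\<in>A. dist y x \<le> dist y z"
  shows "(y - x) \<bullet> w = 0"
  using any_closest_point_dot[OF assms(1-3,4) nearest] any_closest_point_dot[OF assms(1-3,5) nearest]
  by simp

lemma vertex_in_facet_hyp_iff:
  fixes v :: "nat \<Rightarrow> 'a::euclidean_space"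
  assumes inj: "inj_on v {0..DIM('a)}" and indep: "\<not> affine_dependent (v ` {0..DIM('a)})"
    and i: "i \<in> {0..DIM('a)}" and j: "j \<in> {0..DIM('a)}"
  shows "v j \<in> facet_hyp v i \<longleftrightarrow> j \<noteq> i"
proof
  assume "j \<noteq> i"
  then show "v j \<in> facet_hyp v i" unfolding facet_hyp_def using j by (auto intro: hull_inc)
next
  assume h: "v j \<in> facet_hyp v i"
  show "j \<noteq> i"
  proof
    assume "j = i"
    moreover have "v ` ({0..DIM('a)} - {i}) = v ` {0..DIM('a)} - {v i}"
      using inj i by (auto simp: inj_on_def)
    ultimately have "v i \<in> affine hull (v ` {0..DIM('a)} - {v i})"
      using h unfolding facet_hyp_def by simp
    then show False
      using indep i unfolding affine_dependent_def by blast
  qed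
qed

lemma facet_hyp_eq_hyperplane:
  fixes v :: "nat \<Rightarrow> 'a::euclidean_space"
  assumes inj: "inj_on v {0..DIM('a)}" and indep: "\<not> affine_dependent (v ` {0..DIM('a)})"
    and i: "i \<in> {0..DIM('a)}"
  obtains a c where "norm a = 1" "facet_hyp v i = {x. a \<bullet> x = c}"
proof -
  let ?F = "v ` ({0..DIM('a)} - {i})"
  have "\<not> affine_dependent ?F"
    by (rule affine_independent_subset[OF indep]) auto
  then have "int (card ?F) = aff_dim ?F + 1"
    by (rule aff_dim_affine_independent)
  moreover have "card ?F = DIM('a)"
    using inj i by (subst card_image) (auto intro: inj_on_subset)
  ultimately have "aff_dim ?F = DIM('a) - 1"
    by simp
  then obtain b e where b: "b \<noteq> 0" and hull: "affine hull ?F = {x. b \<bullet> x = e}"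
    using aff_dim_eq_hyperplane by blast
  have "{x. b \<bullet> x = e} = {x. (b /\<^sub>R norm b) \<bullet> x = e / norm b}"
    using b by (auto simp: field_simps)
  then show ?thesis
    using that[of "b /\<^sub>R norm b" "e / norm b"] b hull by (simp add: facet_hyp_def)
qed

lemma vector_as_vertex_combination:
  fixes v :: "nat \<Rightarrow> 'a::euclidean_space"
  assumes inj: "inj_on v {0..DIM('a)}" and indep: "\<not> affine_dependent (v ` {0..DIM('a)})"
  obtains \<mu> where "sum \<mu> {0..DIM('a)} = 0" "w = (\<Sum>j\<in>{0..DIM('a)}. \<mu> j *\<^sub>R v j)"
proof -
  let ?I = "{0..DIM('a)}"
  have "card (v ` ?I) = DIM('a) + 1"
    using inj by (simp add: card_image)
  then have "aff_dim (v ` ?I) = DIM('a)"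
    using aff_dim_affine_independent[OF indep] by simp
  then have "v 0 + w \<in> affine hull (v ` ?I)"
    using aff_dim_eq_full by blast
  then obtain u where u: "sum u (v ` ?I) = 1" "(\<Sum>x\<in>v ` ?I. u x *\<^sub>R x) = v 0 + w"
    by (auto simp: affine_hull_finite)
  define \<mu> where "\<mu> j = u (v j) - (if j = 0 then 1 else 0)" for j
  have "sum \<mu> ?I = 0"
    using u(1) inj by (simp add: \<mu>_def sum_subtractf sum.reindex)
  moreover have "(\<Sum>j\<in>?I. \<mu> j *\<^sub>R v j) = w"
  proof -
    have "(\<Sum>j\<in>?I. (if j = 0 then 1 else 0) *\<^sub>R v j) = (\<Sum>j\<in>?I. if j = 0 then v j else 0)"
      by (rule sum.cong) auto
    then show ?thesis
      using u(2) inj by (simp add: \<mu>_def scaleR_diff_left sum_subtractf sum.reindex)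
  qed
  ultimately show ?thesis using that[of \<mu>] by simp
qed

locale hyperplane_family =
  fixes a :: "nat \<Rightarrow> 'a::euclidean_space" and c :: "nat \<Rightarrow> real"
begin

definition wall :: "nat \<Rightarrow> 'a set" where
  "wall i = {x. a i \<bullet> x = c i}"

definition orthonormal :: "nat set \<Rightarrow> bool" where
  "orthonormal S \<longleftrightarrow>
     finite S \<and> (\<forall>i\<in>S. norm (a i) = 1) \<and> (\<forall>i\<in>S. \<forall>j\<in>S. i \<noteq> j \<longrightarrow> a i \<bullet> a j = 0)"

definition normal_proj :: "nat set \<Rightarrow> 'a \<Rightarrow> 'a" where
  "normal_proj S z = (\<Sum>i\<in>S. (a i \<bullet> z) *\<^sub>R a i)"

definition linear_refl :: "nat set \<Rightarrow> 'a \<Rightarrow> 'a" where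
  "linear_refl S z = z - 2 *\<^sub>R normal_proj S z"

text \<open>For orthonormal S, affine_refl S is the product of the reflections in the walls of S.\<close>

definition affine_refl :: "nat set \<Rightarrow> 'a \<Rightarrow> 'a" where
  "affine_refl S x = linear_refl S x + 2 *\<^sub>R (\<Sum>i\<in>S. c i *\<^sub>R a i)"

lemma linear_normal_proj: "linear (normal_proj S)"
  by (rule linearI)
    (simp_all add: normal_proj_def inner_add_right scaleR_add_left sum.distrib scaleR_sum_right)

lemma linear_linear_refl: "linear (linear_refl S)"
  unfolding linear_refl_def[abs_def]
  by (intro linear_compose_sub linear_compose_scale_right linear_normal_proj linear_id[unfolded id_def])

lemma normal_proj_in_span: "normal_proj S z \<in> span (a ` S)"
  unfolding normal_proj_def by (intro span_sum span_scale span_base imageI)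

lemma inner_normal_proj:
  assumes "orthonormal S" "i \<in> S"
  shows "a i \<bullet> normal_proj S z = a i \<bullet> z"
proof -
  have "a i \<bullet> normal_proj S z = (\<Sum>j\<in>S. (a j \<bullet> z) * (a i \<bullet> a j))"
    by (simp add: normal_proj_def inner_sum_right)
  also have "\<dots> = (a i \<bullet> z) * (a i \<bullet> a i)"
    using assms unfolding orthonormal_def by (subst sum.remove[of _ i]) (auto intro!: sum.neutral)
  finally show ?thesis
    using assms by (simp add: orthonormal_def norm_eq_1)
qed

lemma normal_proj_idem:
  assumes "orthonormal S"
  shows "normal_proj S (normal_proj S z) = normal_proj S z"
proof -
  have "normal_proj S (normal_proj S z) = (\<Sum>i\<in>S. (a i \<bullet> normal_proj S z) *\<^sub>R a i)"
    by (rule normal_proj_def)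
  also have "\<dots> = (\<Sum>i\<in>S. (a i \<bullet> z) *\<^sub>R a i)"
    by (rule sum.cong) (simp_all add: inner_normal_proj[OF assms])
  finally show ?thesis by (simp only: normal_proj_def)
qed

lemma normal_proj_self_adjoint: "y \<bullet> normal_proj S z = normal_proj S y \<bullet> z"
  by (simp add: normal_proj_def inner_sum_right inner_sum_left inner_commute mult.commute)

lemma linear_refl_self_adjoint: "y \<bullet> linear_refl S z = linear_refl S y \<bullet> z"
  by (simp add: linear_refl_def inner_diff_right inner_diff_left normal_proj_self_adjoint)

lemma linear_refl_involution:
  assumes "orthonormal S"
  shows "linear_refl S (linear_refl S z) = z"
proof -
  have "normal_proj S (linear_refl S z) = - normal_proj S z"
    using normal_proj_idem[OF assms, of z]
    by (simp add: linear_refl_def linear_diff[OF linear_normal_proj] linear_scale[OF linear_normal_proj])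
      (simp add: scaleR_2)
  then show ?thesis
    by (simp add: linear_refl_def[of S "linear_refl S z"]) (simp add: linear_refl_def)
qed

lemma affine_refl_add: "affine_refl S (x + z) = affine_refl S x + linear_refl S z"
  by (simp add: affine_refl_def linear_add[OF linear_linear_refl] algebra_simps)

lemma affine_refl_fixes:
  assumes "\<forall>i\<in>S. a i \<bullet> x = c i"
  shows "affine_refl S x = x"
  using assms by (simp add: affine_refl_def linear_refl_def normal_proj_def)

lemma normal_proj_eq_self:
  assumes "orthonormal S" and perp: "\<And>w. \<forall>i\<in>S. a i \<bullet> w = 0 \<Longrightarrow> e \<bullet> w = 0"
  shows "normal_proj S e = e"
proof -
  let ?f = "e - normal_proj S e"
  have f: "\<forall>i\<in>S. a i \<bullet> ?f = 0"
    using inner_normal_proj[OF assms(1)] by (simp add: inner_diff_right)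
  then have "normal_proj S ?f = 0"
    by (simp add: normal_proj_def)
  have "?f \<bullet> ?f = e \<bullet> ?f - normal_proj S e \<bullet> ?f"
    by (simp add: inner_diff_left)
  also have "normal_proj S e \<bullet> ?f = e \<bullet> normal_proj S ?f"
    by (simp add: normal_proj_self_adjoint)
  finally have "?f \<bullet> ?f = 0"
    using perp[OF f] \<open>normal_proj S ?f = 0\<close> by simp
  then show ?thesis by simp
qed

lemma dim_span_orthonormal:
  assumes "orthonormal S"
  shows "dim (span (a ` S)) = card S"
proof -
  have unit: "\<And>i. i \<in> S \<Longrightarrow> a i \<bullet> a i = 1"
    and orth: "\<And>i j. i \<in> S \<Longrightarrow> j \<in> S \<Longrightarrow> i \<noteq> j \<Longrightarrow> a i \<bullet> a j = 0"
    using assms by (auto simp: orthonormal_def norm_eq_1)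
  have "0 \<notin> a ` S"
    using unit by (metis image_iff inner_zero_left zero_neq_one)
  moreover have "inj_on a S"
    using unit orth by (force simp: inj_on_def)
  moreover have "independent (a ` S)"
    using orth \<open>0 \<notin> a ` S\<close>
    by (intro pairwise_orthogonal_independent) (auto simp: pairwise_def orthogonal_def)
  ultimately show ?thesis
    using dim_span_eq_card_independent[of "a ` S"] card_image[of a S] by simp
qed

lemma reflect_in_wall:
  assumes "norm (a i) = 1"
  shows "reflect_in (wall i) y = y - (2 * (a i \<bullet> y - c i)) *\<^sub>R a i"
  unfolding wall_def by (rule reflect_in_hyperplane[OF assms])

lemma affine_refl_reflect_in_wall:
  assumes "orthonormal S" "i \<in> S" "A \<subseteq> S" "i \<notin> A"
  shows "affine_refl A (reflect_in (wall i) y) = affine_refl (insert i A) y"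
proof -
  have "finite A" using assms(1,3) finite_subset by (auto simp: orthonormal_def)
  have "normal_proj A (a i) = 0"
    using assms unfolding orthonormal_def normal_proj_def
    by (intro sum.neutral) (auto simp: inner_commute)
  then have "linear_refl A (a i) = a i"
    by (simp add: linear_refl_def)
  with assms(1,2) have refl:
    "linear_refl A (reflect_in (wall i) y) = linear_refl A y - (2 * (a i \<bullet> y - c i)) *\<^sub>R a i"
    by (simp add: reflect_in_wall orthonormal_def linear_diff[OF linear_linear_refl]
        linear_scale[OF linear_linear_refl])
  have ins: "linear_refl (insert i A) y = linear_refl A y - (2 * (a i \<bullet> y)) *\<^sub>R a i"
    using \<open>finite A\<close> assms(4) by (simp add: linear_refl_def normal_proj_def scaleR_add_right)
  have sum: "(\<Sum>j\<in>insert i A. c j *\<^sub>R a j) = c i *\<^sub>R a i + (\<Sum>j\<in>A. c j *\<^sub>R a j)"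
    using \<open>finite A\<close> assms(4) by simp
  show ?thesis
    unfolding affine_refl_def refl ins sum by (simp add: algebra_simps)
qed

lemma fold_reflect_in_walls:
  assumes "orthonormal S"
  shows "distinct xs \<Longrightarrow> set xs \<subseteq> S \<Longrightarrow>
    fold (\<lambda>i f. reflect_in (wall i) \<circ> f) xs g = affine_refl (set xs) \<circ> g"
proof (induction xs arbitrary: g)
  case Nil
  show ?case by (simp add: fun_eq_iff affine_refl_def linear_refl_def normal_proj_def)
next
  case (Cons i xs)
  have "fold (\<lambda>i f. reflect_in (wall i) \<circ> f) (i # xs) g
      = fold (\<lambda>i f. reflect_in (wall i) \<circ> f) xs (reflect_in (wall i) \<circ> g)"
    by simp
  also have "\<dots> = affine_refl (set xs) \<circ> (reflect_in (wall i) \<circ> g)"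
    by (rule Cons.IH) (use Cons.prems in auto)
  also have "\<dots> = affine_refl (set (i # xs)) \<circ> g"
    using affine_refl_reflect_in_wall[OF assms, of i "set xs"] Cons.prems by (auto simp: fun_eq_iff)
  finally show ?case .
qed

lemma dist_affine_refl_comp:
  assumes on0: "\<forall>i\<in>S0. a i \<bullet> x0 = c i" and on1: "\<forall>i\<in>S1. a i \<bullet> x1 = c i"
    and R0: "linear_refl S0 (x1 - x0) = - (x1 - x0)" and R1: "linear_refl S1 (x1 - x0) = - (x1 - x0)"
  shows "(dist y ((affine_refl S1 \<circ> affine_refl S0) y))\<^sup>2
    = 4 * (norm (x1 - x0))\<^sup>2 + (norm (linear_refl S1 (linear_refl S0 (y - x0)) - (y - x0)))\<^sup>2"
proof -
  define d where "d = x1 - x0"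
  define z where "z = y - x0"
  define k where "k = linear_refl S1 (linear_refl S0 z) - z"
  have "affine_refl S0 y = x1 + (linear_refl S0 z - d)"
    using affine_refl_add[of S0 x0 z] affine_refl_fixes[OF on0] by (simp add: z_def d_def)
  then have "(affine_refl S1 \<circ> affine_refl S0) y = x1 + linear_refl S1 (linear_refl S0 z - d)"
    by (simp only: comp_apply affine_refl_add affine_refl_fixes[OF on1])
  also have "linear_refl S1 (linear_refl S0 z - d) = linear_refl S1 (linear_refl S0 z) + d"
    using R1 by (simp add: linear_diff[OF linear_linear_refl] d_def)
  also have "x1 + (linear_refl S1 (linear_refl S0 z) + d) = y + (2 *\<^sub>R d + k)"
    by (simp add: k_def z_def d_def scaleR_2)
  finally have "dist y ((affine_refl S1 \<circ> affine_refl S0) y) = norm (2 *\<^sub>R d + k)"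
    by (metis add_diff_cancel_left' dist_commute dist_norm)
  moreover have "d \<bullet> k = 0"
  proof -
    have R0d: "linear_refl S0 d = - d" and R1d: "linear_refl S1 d = - d"
      using R0 R1 by (simp_all add: d_def)
    have "d \<bullet> linear_refl S1 (linear_refl S0 z) = - (d \<bullet> linear_refl S0 z)"
      using linear_refl_self_adjoint[of d S1 "linear_refl S0 z"] by (simp add: R1d)
    also have "\<dots> = d \<bullet> z"
      using linear_refl_self_adjoint[of d S0 z] by (simp add: R0d)
    finally show ?thesis by (simp add: k_def inner_diff_right)
  qed
  ultimately show ?thesis
    by (simp add: power2_norm_eq_inner inner_add_left inner_add_right inner_commute d_def k_def z_def)
qed

end

locale simplex_walls = hyperplane_family a c
  for a :: "nat \<Rightarrow> 'a::euclidean_space" and c +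
  fixes v :: "nat \<Rightarrow> 'a"
  assumes inj_vertices: "inj_on v {0..DIM('a)}"
    and vertices_independent: "\<not> affine_dependent (v ` {0..DIM('a)})"
    and unit_normal: "i \<in> {0..DIM('a)} \<Longrightarrow> norm (a i) = 1"
    and facet_hyp_eq_wall: "i \<in> {0..DIM('a)} \<Longrightarrow> facet_hyp v i = wall i"
begin

lemma vertex_on_wall_iff:
  assumes "i \<in> {0..DIM('a)}" "j \<in> {0..DIM('a)}"
  shows "a i \<bullet> v j = c i \<longleftrightarrow> j \<noteq> i"
  using vertex_in_facet_hyp_iff[OF inj_vertices vertices_independent assms]
    facet_hyp_eq_wall[OF assms(1)]
  by (simp add: wall_def)

lemma inner_vertex_combination:
  assumes "sum \<mu> {0..DIM('a)} = 0" "i \<in> {0..DIM('a)}"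
  shows "a i \<bullet> (\<Sum>j\<in>{0..DIM('a)}. \<mu> j *\<^sub>R v j) = \<mu> i * (a i \<bullet> v i - c i)"
proof -
  let ?I = "{0..DIM('a)}"
  have "a i \<bullet> (\<Sum>j\<in>?I. \<mu> j *\<^sub>R v j) = (\<Sum>j\<in>?I. \<mu> j * c i + \<mu> j * (a i \<bullet> v j - c i))"
    by (simp add: inner_sum_right algebra_simps)
  also have "\<dots> = (\<Sum>j\<in>?I. \<mu> j) * c i + (\<Sum>j\<in>?I. \<mu> j * (a i \<bullet> v j - c i))"
    by (simp add: sum.distrib sum_distrib_right)
  also have "(\<Sum>j\<in>?I. \<mu> j * (a i \<bullet> v j - c i)) = \<mu> i * (a i \<bullet> v i - c i)"
    using assms(2) vertex_on_wall_iff[OF assms(2)]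
    by (subst sum.remove[of _ i]) (auto intro!: sum.neutral)
  finally show ?thesis using assms(1) by simp
qed

lemma eq_0_if_orthogonal_to_normals:
  assumes "\<forall>i\<in>{0..DIM('a)}. a i \<bullet> p = 0"
  shows "p = 0"
proof -
  obtain \<mu> where \<mu>: "sum \<mu> {0..DIM('a)} = 0" "p = (\<Sum>j\<in>{0..DIM('a)}. \<mu> j *\<^sub>R v j)"
    using vector_as_vertex_combination[OF inj_vertices vertices_independent] by blast
  have "\<mu> i = 0" if "i \<in> {0..DIM('a)}" for i
    using inner_vertex_combination[OF \<mu>(1) that] assms that vertex_on_wall_iff[OF that that]
    by (simp add: \<mu>(2)[symmetric])
  then show ?thesis using \<mu>(2) by simp
qed

lemma span_normals: "span (a ` {0..DIM('a)}) = UNIV"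
proof (rule ccontr)
  assume "span (a ` {0..DIM('a)}) \<noteq> UNIV"
  then obtain p where "p \<noteq> 0" "\<forall>x\<in>span (a ` {0..DIM('a)}). p \<bullet> x = 0"
    using span_not_UNIV_orthogonal by blast
  then have "\<forall>i\<in>{0..DIM('a)}. p \<bullet> a i = 0"
    by (simp add: span_base)
  then have "\<forall>i\<in>{0..DIM('a)}. a i \<bullet> p = 0"
    by (simp add: inner_commute)
  with \<open>p \<noteq> 0\<close> show False
    using eq_0_if_orthogonal_to_normals by blast
qed

lemma no_point_on_all_walls: "\<not> (\<forall>i\<in>{0..DIM('a)}. a i \<bullet> x = c i)"
proof
  let ?I = "{0..DIM('a)}"
  assume on_walls: "\<forall>i\<in>?I. a i \<bullet> x = c i"
  obtain \<mu> where \<mu>: "sum \<mu> ?I = 0" "x - v 0 = (\<Sum>j\<in>?I. \<mu> j *\<^sub>R v j)"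
    using vector_as_vertex_combination[OF inj_vertices vertices_independent] by blast
  have "\<mu> i = 0" if i: "i \<in> ?I" "i \<noteq> 0" for i
  proof -
    have "a i \<bullet> (x - v 0) = 0"
      using on_walls i vertex_on_wall_iff[of i 0] by (simp add: inner_diff_right)
    then show ?thesis
      using inner_vertex_combination[OF \<mu>(1) i(1)] vertex_on_wall_iff[of i i] i by (simp add: \<mu>(2))
  qed
  moreover have "\<mu> 0 = -1"
  proof -
    have "a 0 \<bullet> (x - v 0) = - (a 0 \<bullet> v 0 - c 0)"
      using on_walls by (simp add: inner_diff_right)
    then have "(\<mu> 0 + 1) * (a 0 \<bullet> v 0 - c 0) = 0"
      using inner_vertex_combination[OF \<mu>(1), of 0] by (simp add: \<mu>(2) algebra_simps)
    then show ?thesis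
      using vertex_on_wall_iff[of 0 0] by simp
  qed
  ultimately have "sum \<mu> ?I = -1"
    by (subst sum.remove[of _ 0]) auto
  with \<mu>(1) show False by simp
qed

lemma face_hull_on_walls:
  assumes "S \<subseteq> {0..DIM('a)}" "x \<in> face_hull v S" "i \<in> S"
  shows "a i \<bullet> x = c i"
proof -
  have "face_of_walls v S \<subseteq> facet_hyp v i"
    using assms(3) by (auto simp: face_of_walls_def)
  also have "facet_hyp v i = wall i"
    using assms(1,3) facet_hyp_eq_wall by auto
  finally have "face_of_walls v S \<subseteq> wall i" .
  then have "face_hull v S \<subseteq> wall i"
    unfolding face_hull_def by (rule hull_minimal) (simp add: wall_def affine_hyperplane)
  with assms(2) show ?thesis by (auto simp: wall_def)
qed

lemma vertex_in_face_hull: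
  assumes "S \<subseteq> {0..DIM('a)}" "j \<in> {0..DIM('a)}" "j \<notin> S"
  shows "v j \<in> face_hull v S"
proof -
  have "v j \<in> simplex_of v"
    unfolding simplex_of_def using assms(2) by (intro hull_inc) auto
  moreover have "v j \<in> facet_hyp v i" if "i \<in> S" for i
    using that assms facet_hyp_eq_wall vertex_on_wall_iff by (auto simp: wall_def)
  ultimately show ?thesis
    unfolding face_hull_def face_of_walls_def by (intro hull_inc) auto
qed

lemma face_hull_add_direction:
  assumes S: "S \<subseteq> {0..DIM('a)}" and x: "x \<in> face_hull v S" and w: "\<forall>i\<in>S. a i \<bullet> w = 0"
  shows "x + w \<in> face_hull v S"
proof -
  let ?I = "{0..DIM('a)}"
  let ?D = "(\<lambda>z. z - x) ` face_hull v S"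
  obtain \<mu> where \<mu>: "sum \<mu> ?I = 0" "w = (\<Sum>j\<in>?I. \<mu> j *\<^sub>R v j)"
    using vector_as_vertex_combination[OF inj_vertices vertices_independent] by blast
  have \<mu>_S: "\<mu> i = 0" if "i \<in> S" for i
    using inner_vertex_combination[OF \<mu>(1), of i] w that S vertex_on_wall_iff[of i i]
    by (auto simp: \<mu>(2)[symmetric])
  have D: "subspace ?D"
    unfolding face_hull_def by (rule affine_diffs_subspace_subtract) (use x in \<open>auto simp: face_hull_def\<close>)
  have "w = (\<Sum>j\<in>?I. \<mu> j *\<^sub>R (v j - x))"
    using \<mu> by (simp add: scaleR_diff_right sum_subtractf scaleR_sum_left[symmetric])
  also have "\<dots> \<in> ?D"
  proof (rule subspace_sum[OF D])
    fix j assume j: "j \<in> ?I"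
    show "\<mu> j *\<^sub>R (v j - x) \<in> ?D"
    proof (cases "j \<in> S")
      case True
      then show ?thesis using \<mu>_S subspace_0[OF D] by simp
    next
      case False
      then have "v j - x \<in> ?D" using vertex_in_face_hull[OF S j] by blast
      then show ?thesis by (rule subspace_scale[OF D])
    qed
  qed
  finally show ?thesis by auto
qed

lemma nearest_face_point_normal:
  assumes "orthonormal S" "S \<subseteq> {0..DIM('a)}" "x \<in> face_hull v S"
    and nearest: "\<forall>z\<in>face_hull v S. dist y x \<le> dist y z"
  shows "normal_proj S (y - x) = y - x"
proof (rule normal_proj_eq_self[OF assms(1)])
  fix w assume w: "\<forall>i\<in>S. a i \<bullet> w = 0"
  then have "x + w \<in> face_hull v S" "x - w \<in> face_hull v S"
    using face_hull_add_direction[OF assms(2,3), of w] face_hull_add_direction[OF assms(2,3), of "- w"]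
    by simp_all
  then show "(y - x) \<bullet> w = 0"
    using nearest_point_orthogonal[OF _ _ assms(3) _ _ nearest] by (simp add: face_hull_def)
qed

lemma orthonormal_if_no_edges:
  assumes S: "S \<subseteq> {0..DIM('a)}" and no_edges: "\<forall>i\<in>S. \<forall>j\<in>S. \<not> cox_edge v i j"
  shows "orthonormal S"
proof -
  have inward: "inward_normal v i = (a i \<bullet> v i - c i) *\<^sub>R a i" if "i \<in> {0..DIM('a)}" for i
    using that by (simp add: inward_normal_def facet_hyp_eq_wall wall_def closest_point_hyperplane unit_normal)
  have "a i \<bullet> a j = 0" if ij: "i \<in> S" "j \<in> S" "i \<noteq> j" for i j
  proof -
    have I: "i \<in> {0..DIM('a)}" "j \<in> {0..DIM('a)}" using ij S by auto
    have "vec_angle (inward_normal v i) (inward_normal v j) = pi / 2"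
      using no_edges ij unfolding cox_edge_def dihedral_angle_def by fastforce
    then have "inward_normal v i \<bullet> inward_normal v j = 0"
      using I unit_normal[OF I(1)] unit_normal[OF I(2)] vertex_on_wall_iff[of i i] vertex_on_wall_iff[of j j]
      by (intro inner_eq_0_if_vec_angle_right) (auto simp: inward)
    then show ?thesis
      using I vertex_on_wall_iff[of i i] vertex_on_wall_iff[of j j] by (simp add: inward)
  qed
  then show ?thesis
    using S unit_normal finite_subset[OF S] by (auto simp: orthonormal_def)
qed

lemma prod_refl_eq_affine_refl:
  assumes "orthonormal S" "S \<subseteq> {0..DIM('a)}"
  shows "prod_refl v S = affine_refl S"
proof -
  have "finite S" using assms(1) by (simp add: orthonormal_def)
  have "prod_refl v S = fold (\<lambda>i f. reflect_in (wall i) \<circ> f) (sorted_list_of_set S) id"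
    unfolding prod_refl_def using \<open>finite S\<close> assms(2)
    by (intro fold_cong) (auto simp: facet_hyp_eq_wall)
  also have "\<dots> = affine_refl S"
    using fold_reflect_in_walls[OF assms(1), of "sorted_list_of_set S" id] \<open>finite S\<close> by simp
  finally show ?thesis .
qed

lemma bipartite_fixed_vectors:
  assumes part: "S0 \<union> S1 = {0..DIM('a)}" "S0 \<inter> S1 = {}"
    and o0: "orthonormal S0" and o1: "orthonormal S1"
    and d0: "normal_proj S0 d = d" and d1: "normal_proj S1 d = d" and "d \<noteq> 0"
    and fixed: "linear_refl S1 (linear_refl S0 z) = z"
  shows "z \<in> span {d}"
proof -
  let ?U = "span (a ` S0)" and ?V = "span (a ` S1)"
  have "linear_refl S0 z = linear_refl S1 z"
    using fixed linear_refl_involution[OF o1, of "linear_refl S0 z"] by simp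
  then have proj: "normal_proj S0 z = normal_proj S1 z"
    by (simp add: linear_refl_def)
  have "z - normal_proj S0 z = 0"
  proof (rule eq_0_if_orthogonal_to_normals, rule ballI)
    fix i assume "i \<in> {0..DIM('a)}"
    then consider "i \<in> S0" | "i \<in> S1" using part by blast
    then show "a i \<bullet> (z - normal_proj S0 z) = 0"
      by cases (simp add: inner_diff_right inner_normal_proj[OF o0],
          simp add: inner_diff_right inner_normal_proj[OF o1] proj)
  qed
  then have "z \<in> ?U \<inter> ?V"
    using proj normal_proj_in_span[of S0 z] normal_proj_in_span[of S1 z] by simp
  have "d \<in> ?U \<inter> ?V"
    using normal_proj_in_span[of S0 d] normal_proj_in_span[of S1 d] d0 d1 by simp
  have "{x + y |x y. x \<in> ?U \<and> y \<in> ?V} = UNIV"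
    using span_normals part(1) by (simp add: span_Un[symmetric] image_Un[symmetric])
  moreover have "card S0 + card S1 = DIM('a) + 1"
    using part o0 o1 card_Un_disjoint[of S0 S1] by (simp add: orthonormal_def)
  ultimately have "dim (?U \<inter> ?V) = 1"
    using dim_sums_Int[of ?U ?V] dim_span_orthonormal[OF o0] dim_span_orthonormal[OF o1] by simp
  with \<open>d \<in> ?U \<inter> ?V\<close> \<open>d \<noteq> 0\<close> have "span {d} = span (?U \<inter> ?V)"
    by (intro dim_eq_span) auto
  with \<open>z \<in> ?U \<inter> ?V\<close> show ?thesis
    by (simp add: span_base)
qed

lemma closest_pair_difference:
  assumes part: "S0 \<union> S1 = {0..DIM('a)}" "S0 \<inter> S1 = {}"
    and o0: "orthonormal S0" and o1: "orthonormal S1"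
    and x0: "x0 \<in> face_hull v S0" and x1: "x1 \<in> face_hull v S1"
    and closest: "\<forall>y0\<in>face_hull v S0. \<forall>y1\<in>face_hull v S1. dist x0 x1 \<le> dist y0 y1"
  shows "normal_proj S0 (x1 - x0) = x1 - x0" and "normal_proj S1 (x1 - x0) = x1 - x0"
    and "x1 \<noteq> x0"
proof -
  have S0: "S0 \<subseteq> {0..DIM('a)}" and S1: "S1 \<subseteq> {0..DIM('a)}"
    using part by auto
  show "normal_proj S0 (x1 - x0) = x1 - x0"
    using closest x1 by (intro nearest_face_point_normal[OF o0 S0 x0]) (auto simp: dist_commute)
  have "normal_proj S1 (x0 - x1) = x0 - x1"
    using closest x0 by (intro nearest_face_point_normal[OF o1 S1 x1]) (auto simp: dist_commute)
  then show "normal_proj S1 (x1 - x0) = x1 - x0"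
    by (metis linear_neg[OF linear_normal_proj] minus_diff_eq)
  show "x1 \<noteq> x0"
    using face_hull_on_walls[OF S0 x0] face_hull_on_walls[OF S1 x1] part no_point_on_all_walls[of x0]
    by auto
qed

lemma min_set_bipartite:
  assumes part: "S0 \<union> S1 = {0..DIM('a)}" "S0 \<inter> S1 = {}"
    and o0: "orthonormal S0" and o1: "orthonormal S1"
    and x0: "x0 \<in> face_hull v S0" and x1: "x1 \<in> face_hull v S1"
    and closest: "\<forall>y0\<in>face_hull v S0. \<forall>y1\<in>face_hull v S1. dist x0 x1 \<le> dist y0 y1"
  shows "min_set (affine_refl S1 \<circ> affine_refl S0) = affine hull {x0, x1}"
proof -
  let ?g = "affine_refl S1 \<circ> affine_refl S0"
  define d where "d = x1 - x0"
  define K where "K z = linear_refl S1 (linear_refl S0 z) - z" for z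
  have d0: "normal_proj S0 d = d" and d1: "normal_proj S1 d = d" and "d \<noteq> 0"
    using closest_pair_difference[OF assms] by (simp_all add: d_def)
  then have R0: "linear_refl S0 d = - d" and R1: "linear_refl S1 d = - d"
    by (simp_all add: linear_refl_def scaleR_2)
  have S0: "S0 \<subseteq> {0..DIM('a)}" and S1: "S1 \<subseteq> {0..DIM('a)}"
    using part by auto
  have dist_sq: "(dist y (?g y))\<^sup>2 = 4 * (norm d)\<^sup>2 + (norm (K (y - x0)))\<^sup>2" for y
    using face_hull_on_walls[OF S0 x0] face_hull_on_walls[OF S1 x1] R0 R1
    unfolding K_def d_def by (intro dist_affine_refl_comp) auto
  have K_0: "K z = 0 \<longleftrightarrow> z \<in> span {d}" for z
  proof
    assume "K z = 0"
    then show "z \<in> span {d}"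
      using bipartite_fixed_vectors[OF part o0 o1 d0 d1 \<open>d \<noteq> 0\<close>] by (simp add: K_def)
  next
    assume "z \<in> span {d}"
    then obtain k where "z = k *\<^sub>R d" by (auto simp: span_singleton)
    then show "K z = 0"
      by (simp add: K_def linear_scale[OF linear_linear_refl] linear_neg[OF linear_linear_refl] R0 R1)
  qed
  have "dist y (?g y) \<le> dist y' (?g y') \<longleftrightarrow> norm (K (y - x0)) \<le> norm (K (y' - x0))" for y y'
    using dist_sq[of y] dist_sq[of y'] abs_le_square_iff[of "dist y (?g y)" "dist y' (?g y')"]
      abs_le_square_iff[of "norm (K (y - x0))" "norm (K (y' - x0))"]
    by simp
  moreover have "K 0 = 0"
    using K_0[of 0] span_zero by blast
  ultimately have "min_set ?g = {y. y - x0 \<in> span {d}}"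
    unfolding min_set_def K_0[symmetric] by (auto dest: spec[of _ x0])
  also have "\<dots> = affine hull {x0, x1}"
    using affine_hull_insert_span[of x0 "{x1}"] \<open>d \<noteq> 0\<close> by (auto simp: d_def intro!: exI[of _ "_ - x0"])
  finally show ?thesis .
qed

end

lemma simplex_walls_exist:
  fixes v :: "nat \<Rightarrow> 'a::euclidean_space"
  assumes "inj_on v {0..DIM('a)}" "\<not> affine_dependent (v ` {0..DIM('a)})"
  obtains a c where "simplex_walls a c v"
proof -
  have "\<forall>i. \<exists>a c. i \<in> {0..DIM('a)} \<longrightarrow> norm a = 1 \<and> facet_hyp v i = {x. a \<bullet> x = c}"
    using facet_hyp_eq_hyperplane[OF assms] by metis
  then obtain a c where
    "\<And>i. i \<in> {0..DIM('a)} \<Longrightarrow> norm (a i) = 1 \<and> facet_hyp v i = {x. a i \<bullet> x = c i}"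
    by metis
  then have "simplex_walls a c v"
    using assms by unfold_locales (simp_all add: hyperplane_family.wall_def)
  then show ?thesis by (rule that)
qed

theorem proposition8p8:
  fixes v :: "nat \<Rightarrow> 'a::euclidean_space" and S0 S1 :: "nat set" and x0 x1 :: 'a
  assumes "coxeter_simplex v"
    and "irreducible_coxeter v"
    and "\<not> type_A_tilde v"
    and "S0 \<union> S1 = {0..DIM('a)}" and "S0 \<inter> S1 = {}"
    and "\<forall>i\<in>S0. \<forall>j\<in>S0. \<not> cox_edge v i j"
    and "\<forall>i\<in>S1. \<forall>j\<in>S1. \<not> cox_edge v i j"
    and "x0 \<in> face_hull v S0" and "x1 \<in> face_hull v S1"
    and "\<forall>y0\<in>face_hull v S0. \<forall>y1\<in>face_hull v S1. dist x0 x1 \<le> dist y0 y1"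
  shows "min_set (prod_refl v S1 \<circ> prod_refl v S0) = affine hull {x0, x1}
       \<and> min_set (prod_refl v S0 \<circ> prod_refl v S1) = affine hull {x0, x1}"
proof -
  obtain a c where "simplex_walls a c v"
    using simplex_walls_exist assms(1) unfolding coxeter_simplex_def by blast
  then interpret simplex_walls a c v .
  have S0: "S0 \<subseteq> {0..DIM('a)}" and S1: "S1 \<subseteq> {0..DIM('a)}"
    using assms(4) by auto
  have o0: "orthonormal S0" and o1: "orthonormal S1"
    using orthonormal_if_no_edges S0 S1 assms(6,7) by auto
  have "min_set (affine_refl S1 \<circ> affine_refl S0) = affine hull {x0, x1}"
    using min_set_bipartite[OF assms(4,5) o0 o1 assms(8-10)] .
  moreover have "\<forall>y1\<in>face_hull v S1. \<forall>y0\<in>face_hull v S0. dist x1 x0 \<le> dist y1 y0"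
    using assms(10) by (metis dist_commute)
  then have "min_set (affine_refl S0 \<circ> affine_refl S1) = affine hull {x1, x0}"
    using assms(4,5,8,9) by (intro min_set_bipartite o0 o1) auto
  ultimately show ?thesis
    by (simp add: prod_refl_eq_affine_refl o0 o1 S0 S1 insert_commute)
qed

end
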